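(* Let $M$ be a partial multiplication matrix and let $\pi^\#$ be an $M$-gridded permutation. Then $\pi^\#$ can be expressed as an $M$-sum of $M$-indivisible gridded permutations, $\pi^\#=\pi_1^\#\boxplus\cdots\boxplus\pi_k^\#$. Furthermore, any other expression $\pi^\#=\varphi_1^\#\boxplus\cdots\boxplus\varphi_{\ell}^\#$ of $\pi^\#$ as an $M$-sum of $M$-indivisible gridded permutations satisfies $k=\ell$ and $\{\varphi_1^\#,\dots,\varphi_\ell^\#\}=\{\pi_1^\#,\dots,\pi_k^\#\}$ as multisets.
   Context: A gridding matrix has entries in $\{0,1,-1\}$; an $m\times n$ one has $m$ columns, $n$ rows, $M_{ij}$ in column $i$ from the left and row $j$ from the bottom. An $M$-gridding of a permutation $\pi$ of length $L$ is a choice of vertical lines $\tfrac12=v_0\le\dots\le v_m=L+\tfrac12$ and horizontal lines $\tfrac12=h_0\le\dots\le h_n=L+\tfrac12$, not through points of $\pi$, such that in each cell $C_{ij}=\{v_{i-1}<x<v_i,\ h_{j-1}<y<h_j\}$ the points of $\pi$ are absent if $M_{ij}=0$, increasing if $M_{ij}=1$, decreasing if $M_{ij}=-1$; the result is an $M$-gridded permutation. Two $M$-gridded permutations are regarded as equal if they are order-isomorphic with corresponding points in cells with the same index. $M$ is a partial multiplication matrix: there are fixed $c_1,\dots,c_m,r_1,\dots,r_n\in\{\pm1\}$ with $M_{ij}=c_ir_j$ for each non-zero entry. Column $i$ is oriented left-to-right if $c_i=1$, right-to-left otherwise; row $j$ bottom-to-top if $r_j=1$, top-to-bottom otherwise.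 $M$-sum: for $M$-gridded $\sigma^\#,\tau^\#$, $\sigma^\#\boxplus\tau^\#$ is the $M$-gridded permutation whose points are those of $\sigma^\#$ and $\tau^\#$, each in the cell it occupied, with the relative order (in position and value) among points of $\sigma^\#$ and among points of $\tau^\#$ unchanged, and such that in every column of cells all points of $\sigma^\#$ precede all points of $\tau^\#$ in the column's orientation and in every row of cells all points of $\sigma^\#$ precede all points of $\tau^\#$ in the row's orientation. This operation is associative. $\pi^\#$ is $M$-divisible if $\pi^\#=\sigma^\#\boxplus\tau^\#$ with $\sigma^\#,\tau^\#$ non-empty, and $M$-indivisible otherwise. *)

theory Defs
  imports Main "HOL-Library.Multiset"
begin

text \<open>Gridding matrix: M i j is the entry in column i (from the left, 0-based) and
  row j (from the bottom, 0-based); an m x n matrix has columns 0..<m and rows 0..<n.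

  A gridded permutation is represented canonically (i.e. up to order-isomorphism
  preserving cells) as a list: the entry at index x (position x, 0-based) is
  (value, (column of cell, row of cell)).\<close>

type_synonym gperm = "(nat \<times> (nat \<times> nat)) list"

definition gval :: "gperm \<Rightarrow> nat \<Rightarrow> nat" where
  "gval p x = fst (p ! x)"

definition gcol :: "gperm \<Rightarrow> nat \<Rightarrow> nat" where
  "gcol p x = fst (snd (p ! x))"

definition grow :: "gperm \<Rightarrow> nat \<Rightarrow> nat" where
  "grow p x = snd (snd (p ! x))"

text \<open>Existence of vertical/horizontal grid lines placing each
  point in its recorded cell is equivalent to: cell columns weakly increase with position,
  cell rows weakly increase with value.\<close>
definition gridded :: "nat \<Rightarrow> nat \<Rightarrow> (nat \<Rightarrow> nat \<Rightarrow> int) \<Rightarrow> gperm \<Rightarrow> bool" where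
  "gridded m n M p \<longleftrightarrow>
     distinct (map fst p) \<and> set (map fst p) = {0..<length p} \<and>
     (\<forall>x<length p. gcol p x < m \<and> grow p x < n) \<and>
     (\<forall>x y. x < y \<and> y < length p \<longrightarrow> gcol p x \<le> gcol p y) \<and>
     (\<forall>x<length p. \<forall>y<length p. gval p x < gval p y \<longrightarrow> grow p x \<le> grow p y) \<and>
     (\<forall>x<length p. M (gcol p x) (grow p x) \<noteq> 0) \<and>
     (\<forall>x y. x < y \<and> y < length p \<and> snd (p ! x) = snd (p ! y) \<longrightarrow>
        (M (gcol p x) (grow p x) = 1 \<longrightarrow> gval p x < gval p y) \<and>
        (M (gcol p x) (grow p x) = -1 \<longrightarrow> gval p x > gval p y))"

definition std :: "gperm \<Rightarrow> gperm" where
  "std xs = map (\<lambda>(v, cl). (card {w \<in> fst ` set xs. w < v}, cl)) xs"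

text \<open>Binary M-sum with column orientations c and row orientations r:
  msum2 ... s t p  means  p = s \<boxplus> t.  The set A is the set of positions of p
  carrying the points of s.\<close>
definition msum2 :: "nat \<Rightarrow> nat \<Rightarrow> (nat \<Rightarrow> nat \<Rightarrow> int) \<Rightarrow> (nat \<Rightarrow> int) \<Rightarrow> (nat \<Rightarrow> int)
    \<Rightarrow> gperm \<Rightarrow> gperm \<Rightarrow> gperm \<Rightarrow> bool" where
  "msum2 m n M c r s t p \<longleftrightarrow>
     gridded m n M s \<and> gridded m n M t \<and> gridded m n M p \<and>
     (\<exists>A. A \<subseteq> {0..<length p} \<and>
        std (nths p A) = s \<and> std (nths p ({0..<length p} - A)) = t \<and>
        (\<forall>x\<in>A. \<forall>y\<in>{0..<length p} - A.
           (gcol p x = gcol p y \<longrightarrow>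
              (c (gcol p x) = 1 \<longrightarrow> x < y) \<and> (c (gcol p x) = -1 \<longrightarrow> y < x)) \<and>
           (grow p x = grow p y \<longrightarrow>
              (r (grow p x) = 1 \<longrightarrow> gval p x < gval p y) \<and>
              (r (grow p x) = -1 \<longrightarrow> gval p y < gval p x))))"

text \<open>Iterated M-sum  p = p1 \<boxplus> (p2 \<boxplus> (... \<boxplus> pk))  (bracketing irrelevant by
  associativity); the empty sum is the empty gridded permutation.\<close>
fun msum_list :: "nat \<Rightarrow> nat \<Rightarrow> (nat \<Rightarrow> nat \<Rightarrow> int) \<Rightarrow> (nat \<Rightarrow> int) \<Rightarrow> (nat \<Rightarrow> int)
    \<Rightarrow> gperm list \<Rightarrow> gperm \<Rightarrow> bool" where
  "msum_list m n M c r [] p \<longleftrightarrow> p = []"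
| "msum_list m n M c r (q # qs) p \<longleftrightarrow>
     (\<exists>u. msum_list m n M c r qs u \<and> msum2 m n M c r q u p)"

definition divisible :: "nat \<Rightarrow> nat \<Rightarrow> (nat \<Rightarrow> nat \<Rightarrow> int) \<Rightarrow> (nat \<Rightarrow> int) \<Rightarrow> (nat \<Rightarrow> int)
    \<Rightarrow> gperm \<Rightarrow> bool" where
  "divisible m n M c r p \<longleftrightarrow> (\<exists>s t. s \<noteq> [] \<and> t \<noteq> [] \<and> msum2 m n M c r s t p)"

text \<open>Indivisible summands are taken nonempty (otherwise empty summands could be
  inserted freely and uniqueness would fail).\<close>
definition indivisible :: "nat \<Rightarrow> nat \<Rightarrow> (nat \<Rightarrow> nat \<Rightarrow> int) \<Rightarrow> (nat \<Rightarrow> int) \<Rightarrow> (nat \<Rightarrow> int)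
    \<Rightarrow> gperm \<Rightarrow> bool" where
  "indivisible m n M c r p \<longleftrightarrow> gridded m n M p \<and> p \<noteq> [] \<and> \<not> divisible m n M c r p"

end

theory Submission
  imports Defs
begin

(* Say that a point x precedes a point y of a gridded permutation when they lie in the same
   column (row) of cells and x comes first in the orientation of that column (row).  Then p is
   the M-sum of s and t exactly when the positions of s form a set closed under predecessors
   (a downset) and s, t are the patterns of this set and of its complement.  Consequently p is
   indivisible iff its precedence graph is strongly connected.  If p is the M-sum of q and u with
   q indivisible, the positions of q form one strong component of p, and the other components
   are those of u; by induction, the summands of any decomposition into indivisibles are the
   patterns of the strong components of p, each occurring once.  For existence, the pattern of a
   smallest nonempty downset is indivisible and can be split off. *)

lemma nths_eq_map_nth_sorted_list_of_set:
  assumes "S \<subseteq> {..<length xs}"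
  shows "nths xs S = map ((!) xs) (sorted_list_of_set S)"
proof -
  let ?is = "filter (\<lambda>i. i \<in> S) [0..<length xs]"
  have "{i. i < length [0..<length xs] \<and> [0..<length xs] ! i \<in> S} = S"
    using assms by auto
  then have "nths [0..<length xs] S = ?is"
    using filter_eq_nths[of "\<lambda>i. i \<in> S" "[0..<length xs]"] by simp
  moreover have "sorted_list_of_set S = ?is"
    using assms finite_subset[OF assms] by (intro sorted_distinct_set_unique) (auto intro: sorted_wrt_filter)
  ultimately show ?thesis
    by (metis map_nth nths_map)
qed

lemma sorted_list_of_set_image_strict_mono:
  assumes "finite S" and "\<And>x y. x \<in> S \<Longrightarrow> y \<in> S \<Longrightarrow> x < y \<Longrightarrow> f x < f y"
  shows "sorted_list_of_set (f ` S) = map f (sorted_list_of_set (S :: nat set))"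
proof -
  have "inj_on f S"
    using assms(2) by (metis inj_onI linorder_neqE_nat order_less_irrefl)
  moreover have "sorted_wrt (<) (map f (sorted_list_of_set S))"
    unfolding sorted_wrt_map
    by (rule sorted_wrt_mono_rel[OF _ strict_sorted_list_of_set]) (use assms in auto)
  ultimately show ?thesis
    using assms(1) by (subst sorted_list_of_set_unique[symmetric]) (auto simp: card_image)
qed

lemma nth_sorted_list_of_set_mem:
  "finite S \<Longrightarrow> k < card S \<Longrightarrow> sorted_list_of_set S ! k \<in> S"
  using nth_mem[of k "sorted_list_of_set S"] by simp

lemma nth_sorted_list_of_set_image:
  "finite S \<Longrightarrow> (!) (sorted_list_of_set S) ` {..<card S} = S"
  by (metis atLeast0LessThan length_sorted_list_of_set set_sorted_list_of_set set_upt
      map_nth set_map)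

lemma rtranclp_map:
  assumes "\<And>x y. S x y \<Longrightarrow> R (f x) (f y)" and "S\<^sup>*\<^sup>* x y"
  shows "R\<^sup>*\<^sup>* (f x) (f y)"
  using assms(2) by induction (auto intro: rtranclp.rtrancl_into_rtrancl assms(1))

lemma rtranclp_pullback:
  assumes closed: "\<And>a b. R a b \<Longrightarrow> a \<in> f ` K \<Longrightarrow> b \<in> f ` K"
    and reflect: "\<And>i j. i \<in> K \<Longrightarrow> j \<in> K \<Longrightarrow> R (f i) (f j) \<Longrightarrow> S i j"
    and "R\<^sup>*\<^sup>* (f i) b" and "i \<in> K"
  shows "\<exists>j\<in>K. f j = b \<and> S\<^sup>*\<^sup>* i j"
  using assms(3)
proof (induction rule: rtranclp_induct)
  case base
  then show ?case
    using \<open>i \<in> K\<close> by blast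
next
  case (step y z)
  then obtain j where "j \<in> K" "f j = y" "S\<^sup>*\<^sup>* i j"
    by blast
  moreover obtain l where "l \<in> K" "f l = z"
    using closed[OF step(2)] \<open>j \<in> K\<close> \<open>f j = y\<close> by blast
  ultimately show ?case
    using reflect step(2) by (metis rtranclp.rtrancl_into_rtrancl)
qed

section \<open>Patterns of position sets\<close>

definition standard :: "gperm \<Rightarrow> bool" where
  "standard xs \<longleftrightarrow> distinct (map fst xs) \<and> set (map fst xs) = {0..<length xs}"

definition same_pattern :: "gperm \<Rightarrow> gperm \<Rightarrow> bool" where
  "same_pattern xs ys \<longleftrightarrow> length xs = length ys \<and> (\<forall>k<length xs. snd (xs ! k) = snd (ys ! k)) \<and>
     (\<forall>k<length xs. \<forall>l<length xs. fst (xs ! k) < fst (xs ! l) \<longleftrightarrow> fst (ys ! k) < fst (ys ! l))"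

lemma length_std [simp]: "length (std xs) = length xs"
  by (simp add: std_def)

lemma nth_std:
  "k < length xs \<Longrightarrow> std xs ! k = (card {w \<in> fst ` set xs. w < fst (xs ! k)}, snd (xs ! k))"
  by (simp add: std_def case_prod_beta)

lemma same_pattern_std: "same_pattern (std xs) xs"
proof -
  let ?below = "\<lambda>a. {w \<in> fst ` set xs. w < a}"
  have "card (?below a) < card (?below b) \<longleftrightarrow> a < b" if "a \<in> fst ` set xs" for a b
  proof
    show "card (?below a) < card (?below b)" if "a < b"
      using \<open>a \<in> fst ` set xs\<close> that by (intro psubset_card_mono) auto
    show "a < b" if "card (?below a) < card (?below b)"
    proof (rule ccontr)
      assume "\<not> a < b"
      then have "card (?below b) \<le> card (?below a)"
        by (intro card_mono) auto
      with that show False by simp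
    qed
  qed
  then show ?thesis
    unfolding same_pattern_def by (simp add: nth_std)
qed

lemma fst_nth_std:
  assumes "distinct (map fst xs)" and "k < length xs"
  shows "fst (std xs ! k) = card {l. l < length xs \<and> fst (xs ! l) < fst (xs ! k)}"
proof -
  have "fst ` set xs = (\<lambda>l. fst (xs ! l)) ` {..<length xs}"
    by (force simp: set_conv_nth)
  then have "{w \<in> fst ` set xs. w < fst (xs ! k)}
      = (\<lambda>l. fst (xs ! l)) ` {l. l < length xs \<and> fst (xs ! l) < fst (xs ! k)}"
    by auto
  moreover have "inj_on (\<lambda>l. fst (xs ! l)) {l. l < length xs \<and> fst (xs ! l) < fst (xs ! k)}"
    using assms(1) by (auto simp: inj_on_def distinct_conv_nth)
  ultimately show ?thesis
    using assms(2) by (simp add: nth_std card_image)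
qed

lemma std_eq_if_same_pattern:
  assumes "distinct (map fst xs)" "distinct (map fst ys)" "same_pattern xs ys"
  shows "std xs = std ys"
proof (rule nth_equalityI)
  show "length (std xs) = length (std ys)"
    using assms(3) by (simp add: same_pattern_def)
  fix k assume "k < length (std xs)"
  then have k: "k < length xs"
    by simp
  have "{l. l < length xs \<and> fst (xs ! l) < fst (xs ! k)}
      = {l. l < length ys \<and> fst (ys ! l) < fst (ys ! k)}"
    using assms(3) k unfolding same_pattern_def by auto
  moreover have "snd (xs ! k) = snd (ys ! k)" and "k < length ys"
    using assms(3) k unfolding same_pattern_def by auto
  ultimately show "std xs ! k = std ys ! k"
    using assms k by (simp add: prod_eq_iff fst_nth_std) (simp add: nth_std)
qed

lemma standard_std:
  assumes "distinct (map fst xs)"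
  shows "standard (std xs)"
proof -
  have distinct: "distinct (map fst (std xs))"
    using assms same_pattern_std[of xs]
    by (auto simp: distinct_conv_nth same_pattern_def linorder_neq_iff)
  have "fst (std xs ! k) < length xs" if "k < length xs" for k
  proof -
    have "card {l. l < length xs \<and> fst (xs ! l) < fst (xs ! k)} < card {..<length xs}"
      using that by (intro psubset_card_mono) auto
    then show ?thesis
      using that assms by (simp add: fst_nth_std)
  qed
  then have "set (map fst (std xs)) \<subseteq> {0..<length xs}"
    by (auto simp: set_conv_nth)
  moreover have "card (set (map fst (std xs))) = length xs"
    using distinct distinct_card by fastforce
  ultimately show ?thesis
    using distinct by (simp add: standard_def card_subset_eq)
qed

definition embeds :: "(nat \<Rightarrow> nat) \<Rightarrow> gperm \<Rightarrow> gperm \<Rightarrow> bool" where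
  "embeds f q p \<longleftrightarrow> (\<forall>k<length q. f k < length p) \<and> (\<forall>k l. k < l \<and> l < length q \<longrightarrow> f k < f l) \<and>
     (\<forall>k<length q. snd (q ! k) = snd (p ! f k)) \<and>
     (\<forall>k<length q. \<forall>l<length q. fst (q ! k) < fst (q ! l) \<longleftrightarrow> fst (p ! f k) < fst (p ! f l))"

lemma embeds_less_iff:
  "embeds f q p \<Longrightarrow> k < length q \<Longrightarrow> l < length q \<Longrightarrow> f k < f l \<longleftrightarrow> k < l"
  unfolding embeds_def by (metis linorder_neqE_nat order_less_asym order_less_irrefl)

lemma embeds_inj_on: "embeds f q p \<Longrightarrow> inj_on f {..<length q}"
  unfolding inj_on_def by (metis embeds_less_iff lessThan_iff less_irrefl linorder_neqE_nat)

lemma distinct_embeds: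
  assumes "embeds f q p" and "distinct (map fst p)"
  shows "distinct (map fst q)"
proof -
  have "fst (q ! k) \<noteq> fst (q ! l)" if "k < length q" "l < length q" "k \<noteq> l" for k l
  proof -
    have "f k \<noteq> f l"
      using embeds_inj_on[OF assms(1)] that by (auto simp: inj_on_def)
    moreover have "f k < length p" "f l < length p"
      using assms(1) that by (auto simp: embeds_def)
    ultimately have "fst (p ! f k) \<noteq> fst (p ! f l)"
      using assms(2) by (simp add: distinct_conv_nth)
    moreover have "fst (q ! k) < fst (q ! l) \<longleftrightarrow> fst (p ! f k) < fst (p ! f l)"
      and "fst (q ! l) < fst (q ! k) \<longleftrightarrow> fst (p ! f l) < fst (p ! f k)"
      using assms(1) that unfolding embeds_def by blast+
    ultimately show ?thesis
      by (auto simp: linorder_neq_iff)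
  qed
  then show ?thesis
    by (simp add: distinct_conv_nth)
qed

lemma length_nths_subset: "S \<subseteq> {..<length p} \<Longrightarrow> length (nths p S) = card S"
  by (simp add: length_nths subset_eq Collect_mem_eq conj_commute cong: conj_cong)

lemma length_std_nths: "S \<subseteq> {..<length p} \<Longrightarrow> length (std (nths p S)) = card S"
  by (simp add: length_nths_subset)

lemma image_sorted_list_of_set_std_nths:
  assumes "S \<subseteq> {..<length p}"
  shows "(!) (sorted_list_of_set S) ` {..<length (std (nths p S))} = S"
  using nth_sorted_list_of_set_image[OF finite_subset[OF assms]] length_nths_subset[OF assms]
  by simp

lemma embeds_std_nths:
  assumes "S \<subseteq> {..<length p}"
  shows "embeds ((!) (sorted_list_of_set S)) (std (nths p S)) p"
proof -
  let ?l = "sorted_list_of_set S"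
  have nth_nths: "nths p S ! k = p ! (?l ! k)" if "k < card S" for k
    using that finite_subset[OF assms] by (simp add: nths_eq_map_nth_sorted_list_of_set[OF assms])
  have "?l ! k \<in> S" if "k < card S" for k
    using that finite_subset[OF assms] by (simp add: nth_sorted_list_of_set_mem)
  moreover have "?l ! k < ?l ! l" if "k < l" "l < card S" for k l
    using that by (simp add: sorted_wrt_nth_less)
  ultimately show ?thesis
    using same_pattern_std[of "nths p S"] assms length_nths_subset[OF assms]
    unfolding embeds_def same_pattern_def by (auto simp: nth_nths)
qed

lemma std_nths_embeds:
  assumes e: "embeds f q p" and "distinct (map fst p)" and C: "C \<subseteq> {..<length q}"
  shows "std (nths q C) = std (nths p (f ` C))"
proof -
  let ?l = "sorted_list_of_set C"
  have fC: "f ` C \<subseteq> {..<length p}"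
    using e C unfolding embeds_def by auto
  have "sorted_list_of_set (f ` C) = map f ?l"
    using e C finite_subset[OF C]
    by (intro sorted_list_of_set_image_strict_mono) (auto simp: embeds_def)
  then have p_part: "nths p (f ` C) = map (nth p) (map f ?l)"
    using nths_eq_map_nth_sorted_list_of_set[OF fC] by simp
  have q_part: "nths q C = map (nth q) ?l"
    by (rule nths_eq_map_nth_sorted_list_of_set[OF C])
  have "?l ! k < length q" if "k < length ?l" for k
    using that C nth_sorted_list_of_set_mem[OF finite_subset[OF C]] by auto
  then have "same_pattern (nths q C) (nths p (f ` C))"
    unfolding same_pattern_def p_part q_part using e unfolding embeds_def by auto
  moreover have "distinct (map fst (nths q C))" "distinct (map fst (nths p (f ` C)))"
    using distinct_embeds[OF assms(1,2)] assms(2) by (simp_all add: distinct_nthsI flip: nths_map)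
  ultimately show ?thesis
    by (simp add: std_eq_if_same_pattern)
qed

lemma gridded_embeds:
  assumes p: "gridded m n M p" and e: "embeds f q p" and "standard q"
  shows "gridded m n M q"
proof -
  have cell: "gcol q k = gcol p (f k)" "grow q k = grow p (f k)" "snd (q ! k) = snd (p ! f k)"
    and pos: "f k < length p" if "k < length q" for k
    using e that unfolding embeds_def gcol_def grow_def by auto
  have val: "gval q k < gval q l \<longleftrightarrow> gval p (f k) < gval p (f l)"
    if "k < length q" "l < length q" for k l
    using e that unfolding embeds_def gval_def by auto
  have mono: "f k < f l" if "k < l" "l < length q" for k l
    using e that unfolding embeds_def by auto
  show ?thesis
    unfolding gridded_def
  proof (intro conjI allI impI)
    show "distinct (map fst q)" "set (map fst q) = {0..<length q}"
      using \<open>standard q\<close> unfolding standard_def by auto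
  next
    fix x assume "x < length q"
    then show "gcol q x < m" "grow q x < n" "M (gcol q x) (grow q x) \<noteq> 0"
      using p cell pos unfolding gridded_def by auto
  next
    fix x y assume "x < y \<and> y < length q"
    then show "gcol q x \<le> gcol q y"
      using p cell mono pos unfolding gridded_def by (metis order.strict_trans)
  next
    fix x y assume "x < length q" "y < length q" "gval q x < gval q y"
    then show "grow q x \<le> grow q y"
      using p cell val pos unfolding gridded_def by metis
  next
    fix x y assume xy: "x < y \<and> y < length q \<and> snd (q ! x) = snd (q ! y)"
    then have "x < length q" by simp
    with xy show "M (gcol q x) (grow q x) = 1 \<Longrightarrow> gval q x < gval q y"
      and "M (gcol q x) (grow q x) = -1 \<Longrightarrow> gval q y < gval q x"
      using p cell val pos mono unfolding gridded_def by metis+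
  qed
qed

lemma gridded_std_nths:
  assumes p: "gridded m n M p" and S: "S \<subseteq> {..<length p}"
  shows "gridded m n M (std (nths p S))"
proof -
  have "distinct (map fst p)"
    using p unfolding gridded_def by simp
  then have "standard (std (nths p S))"
    by (simp add: standard_std flip: nths_map)
  then show ?thesis
    by (rule gridded_embeds[OF p embeds_std_nths[OF S]])
qed

section \<open>Precedence and M-sums\<close>

definition precedes :: "(nat \<Rightarrow> int) \<Rightarrow> (nat \<Rightarrow> int) \<Rightarrow> gperm \<Rightarrow> nat \<Rightarrow> nat \<Rightarrow> bool" where
  "precedes c r p x y \<longleftrightarrow> x < length p \<and> y < length p \<and>
    (gcol p x = gcol p y \<and> (c (gcol p x) = 1 \<and> x < y \<or> c (gcol p x) = -1 \<and> y < x) \<or>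
     grow p x = grow p y \<and>
       (r (grow p x) = 1 \<and> gval p x < gval p y \<or> r (grow p x) = -1 \<and> gval p y < gval p x))"

definition downset :: "(nat \<Rightarrow> int) \<Rightarrow> (nat \<Rightarrow> int) \<Rightarrow> gperm \<Rightarrow> nat set \<Rightarrow> bool" where
  "downset c r p A \<longleftrightarrow> A \<subseteq> {..<length p} \<and> (\<forall>x y. precedes c r p x y \<longrightarrow> y \<in> A \<longrightarrow> x \<in> A)"

lemma precedes_less_length: "precedes c r p x y \<Longrightarrow> x < length p \<and> y < length p"
  by (simp add: precedes_def)

lemma precedes_embeds:
  assumes e: "embeds f q p" and k: "k < length q" and l: "l < length q"
  shows "precedes c r q k l \<longleftrightarrow> precedes c r p (f k) (f l)"
proof -
  have cell: "gcol q i = gcol p (f i)" "grow q i = grow p (f i)" if "i < length q" for i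
    using e that unfolding embeds_def gcol_def grow_def by auto
  have "gval q k < gval q l \<longleftrightarrow> gval p (f k) < gval p (f l)"
    "gval q l < gval q k \<longleftrightarrow> gval p (f l) < gval p (f k)"
    using e k l unfolding embeds_def gval_def by auto
  moreover have "f k < length p" "f l < length p"
    using e k l unfolding embeds_def by auto
  ultimately show ?thesis
    unfolding precedes_def using cell[OF k] cell[OF l] k l embeds_less_iff[OF e k l] embeds_less_iff[OF e l k]
    by (simp only: simp_thms)
qed

definition sum_ordered :: "(nat \<Rightarrow> int) \<Rightarrow> (nat \<Rightarrow> int) \<Rightarrow> gperm \<Rightarrow> nat \<Rightarrow> nat \<Rightarrow> bool" where
  "sum_ordered c r p x y \<longleftrightarrow>
     (gcol p x = gcol p y \<longrightarrow> (c (gcol p x) = 1 \<longrightarrow> x < y) \<and> (c (gcol p x) = -1 \<longrightarrow> y < x)) \<and>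
     (grow p x = grow p y \<longrightarrow>
        (r (grow p x) = 1 \<longrightarrow> gval p x < gval p y) \<and> (r (grow p x) = -1 \<longrightarrow> gval p y < gval p x))"

lemma msum2_iff_sum_ordered:
  "msum2 m n M c r s t p \<longleftrightarrow> gridded m n M s \<and> gridded m n M t \<and> gridded m n M p \<and>
     (\<exists>A. A \<subseteq> {..<length p} \<and> std (nths p A) = s \<and> std (nths p ({..<length p} - A)) = t \<and>
        (\<forall>x\<in>A. \<forall>y\<in>{..<length p} - A. sum_ordered c r p x y))"
  unfolding msum2_def sum_ordered_def atLeast0LessThan ..

lemma sum_ordered_iff_not_precedes:
  assumes c: "\<forall>i<m. c i \<in> {-1, 1}" and r: "\<forall>j<n. r j \<in> {-1, 1}"
    and p: "gridded m n M p" and x: "x < length p" and y: "y < length p" and "x \<noteq> y"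
  shows "sum_ordered c r p x y \<longleftrightarrow> \<not> precedes c r p y x"
proof -
  have "gval p x \<noteq> gval p y"
    using p x y \<open>x \<noteq> y\<close> unfolding gridded_def gval_def by (simp add: distinct_conv_nth)
  have "gcol p x < m" "grow p x < n"
    using p x unfolding gridded_def by auto
  then have c1: "c (gcol p x) = 1 \<or> c (gcol p x) = -1" and r1: "r (grow p x) = 1 \<or> r (grow p x) = -1"
    using c r by auto
  have col: "(gcol p x = gcol p y \<longrightarrow> (c (gcol p x) = 1 \<longrightarrow> x < y) \<and> (c (gcol p x) = -1 \<longrightarrow> y < x))
      \<longleftrightarrow> \<not> (gcol p y = gcol p x \<and> (c (gcol p y) = 1 \<and> y < x \<or> c (gcol p y) = -1 \<and> x < y))"
  proof (cases "gcol p x = gcol p y")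
    case True
    show ?thesis
      using c1 \<open>x \<noteq> y\<close> unfolding True by (cases "c (gcol p y) = 1") auto
  qed auto
  have row: "(grow p x = grow p y \<longrightarrow>
        (r (grow p x) = 1 \<longrightarrow> gval p x < gval p y) \<and> (r (grow p x) = -1 \<longrightarrow> gval p y < gval p x))
      \<longleftrightarrow> \<not> (grow p y = grow p x \<and>
        (r (grow p y) = 1 \<and> gval p y < gval p x \<or> r (grow p y) = -1 \<and> gval p x < gval p y))"
  proof (cases "grow p x = grow p y")
    case True
    show ?thesis
      using r1 \<open>gval p x \<noteq> gval p y\<close> unfolding True by (cases "r (grow p y) = 1") auto
  qed auto
  show ?thesis
    unfolding sum_ordered_def precedes_def col row using x y by simp
qed

lemma downset_iff_sum_ordered:
  assumes c: "\<forall>i<m. c i \<in> {-1, 1}" and r: "\<forall>j<n. r j \<in> {-1, 1}"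
    and p: "gridded m n M p" and A: "A \<subseteq> {..<length p}"
  shows "downset c r p A \<longleftrightarrow> (\<forall>x\<in>A. \<forall>y\<in>{..<length p} - A. sum_ordered c r p x y)"
proof -
  have "sum_ordered c r p x y \<longleftrightarrow> \<not> precedes c r p y x" if "x \<in> A" "y \<in> {..<length p} - A" for x y
    using sum_ordered_iff_not_precedes[OF c r p] A that by blast
  then show ?thesis
    unfolding downset_def using A precedes_less_length by blast
qed

lemma msum2_iff_downset:
  assumes c: "\<forall>i<m. c i \<in> {-1, 1}" and r: "\<forall>j<n. r j \<in> {-1, 1}" and p: "gridded m n M p"
  shows "msum2 m n M c r s t p \<longleftrightarrow>
    (\<exists>A. downset c r p A \<and> s = std (nths p A) \<and> t = std (nths p ({..<length p} - A)))"
  unfolding msum2_iff_sum_ordered using downset_iff_sum_ordered[OF c r p] gridded_std_nths[OF p] p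
  by (auto simp: downset_def)

lemma std_nths_eq_Nil_iff: "S \<subseteq> {..<length p} \<Longrightarrow> std (nths p S) = [] \<longleftrightarrow> S = {}"
  using length_std_nths[of S p] finite_subset[of S "{..<length p}"] by (metis card_0_eq finite_lessThan length_0_conv)

lemma indivisible_iff_downset:
  assumes c: "\<forall>i<m. c i \<in> {-1, 1}" and r: "\<forall>j<n. r j \<in> {-1, 1}" and q: "gridded m n M q"
  shows "indivisible m n M c r q \<longleftrightarrow>
    q \<noteq> [] \<and> (\<forall>A. downset c r q A \<longrightarrow> A = {} \<or> A = {..<length q})"
proof -
  have "std (nths q A) = [] \<longleftrightarrow> A = {}"
    and "std (nths q ({..<length q} - A)) = [] \<longleftrightarrow> A = {..<length q}"
    if "downset c r q A" for A
    using that std_nths_eq_Nil_iff[of A q] std_nths_eq_Nil_iff[of "{..<length q} - A" q]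
    unfolding downset_def by auto
  then have "divisible m n M c r q \<longleftrightarrow> (\<exists>A. downset c r q A \<and> A \<noteq> {} \<and> A \<noteq> {..<length q})"
    unfolding divisible_def msum2_iff_downset[OF c r q] by blast
  then show ?thesis
    using q unfolding indivisible_def by blast
qed

lemma downset_rtranclp:
  assumes "downset c r p A" and "(precedes c r p)\<^sup>*\<^sup>* x y" and "y \<in> A"
  shows "x \<in> A"
  using assms(2,3) by (induction rule: converse_rtranclp_induct) (use assms(1) in \<open>auto simp: downset_def\<close>)

lemma indivisible_rtranclp_precedes:
  assumes c: "\<forall>i<m. c i \<in> {-1, 1}" and r: "\<forall>j<n. r j \<in> {-1, 1}"
    and q: "indivisible m n M c r q" and "x < length q" and "y < length q"
  shows "(precedes c r q)\<^sup>*\<^sup>* x y"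
proof -
  let ?A = "{z. z < length q \<and> (precedes c r q)\<^sup>*\<^sup>* z y}"
  have "downset c r q ?A"
    unfolding downset_def by (auto dest: precedes_less_length intro: converse_rtranclp_into_rtranclp)
  moreover have "y \<in> ?A"
    using \<open>y < length q\<close> by simp
  moreover have "gridded m n M q"
    using q unfolding indivisible_def by simp
  ultimately have "?A = {..<length q}"
    using q indivisible_iff_downset[OF c r] by blast
  then show ?thesis
    using \<open>x < length q\<close> by auto
qed

lemma rtranclp_precedes_embeds:
  assumes "embeds f q p" and "(precedes c r q)\<^sup>*\<^sup>* k l"
  shows "(precedes c r p)\<^sup>*\<^sup>* (f k) (f l)"
proof (rule rtranclp_map[OF _ assms(2)])
  fix x y assume "precedes c r q x y"
  then show "precedes c r p (f x) (f y)"
    using precedes_embeds[OF assms(1)] precedes_less_length by blast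
qed

section \<open>Strong components\<close>

definition scc :: "(nat \<Rightarrow> int) \<Rightarrow> (nat \<Rightarrow> int) \<Rightarrow> gperm \<Rightarrow> nat \<Rightarrow> nat set" where
  "scc c r p x = {y. y < length p \<and> (precedes c r p)\<^sup>*\<^sup>* x y \<and> (precedes c r p)\<^sup>*\<^sup>* y x}"

definition components :: "(nat \<Rightarrow> int) \<Rightarrow> (nat \<Rightarrow> int) \<Rightarrow> gperm \<Rightarrow> gperm multiset" where
  "components c r p = image_mset (\<lambda>B. std (nths p B)) (mset_set (scc c r p ` {..<length p}))"

lemma scc_eq_downset:
  assumes A: "downset c r p A" and f: "embeds f q p" "f ` {..<length q} = A"
    and strong: "\<And>k l. k < length q \<Longrightarrow> l < length q \<Longrightarrow> (precedes c r q)\<^sup>*\<^sup>* k l"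
    and "x \<in> A"
  shows "scc c r p x = A"
proof
  show "scc c r p x \<subseteq> A"
    using downset_rtranclp[OF A] \<open>x \<in> A\<close> unfolding scc_def by blast
  show "A \<subseteq> scc c r p x"
  proof
    fix y assume "y \<in> A"
    then obtain k l where "k < length q" "f k = x" "l < length q" "f l = y"
      using \<open>x \<in> A\<close> f(2) by blast
    then show "y \<in> scc c r p x"
      using rtranclp_precedes_embeds[OF f(1)] strong A \<open>y \<in> A\<close>
      unfolding scc_def downset_def by blast
  qed
qed

lemma scc_embeds_complement:
  assumes A: "downset c r p A" and e: "embeds e u p" "e ` {..<length u} = {..<length p} - A"
    and k: "k < length u"
  shows "scc c r p (e k) = e ` scc c r u k"
proof
  show "e ` scc c r u k \<subseteq> scc c r p (e k)"
    using rtranclp_precedes_embeds[OF e(1)] e(1) unfolding scc_def embeds_def by blast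
  show "scc c r p (e k) \<subseteq> e ` scc c r u k"
  proof
    fix y assume y: "y \<in> scc c r p (e k)"
    have closed: "b \<in> e ` {..<length u}" if "precedes c r p a b" "a \<in> e ` {..<length u}" for a b
      using A that e(2) unfolding downset_def precedes_def by blast
    have reflect: "precedes c r u i j" if "i \<in> {..<length u}" "j \<in> {..<length u}"
      "precedes c r p (e i) (e j)" for i j
      using that precedes_embeds[OF e(1)] by blast
    have pullback: "\<exists>j\<in>{..<length u}. e j = b \<and> (precedes c r u)\<^sup>*\<^sup>* i j"
      if "(precedes c r p)\<^sup>*\<^sup>* (e i) b" "i < length u" for i b
      using rtranclp_pullback[of "precedes c r p" e "{..<length u}" "precedes c r u" i b]
        closed reflect that by blast
    obtain l where l: "l < length u" "e l = y" "(precedes c r u)\<^sup>*\<^sup>* k l"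
      using pullback[of k y] y k unfolding scc_def by auto
    moreover obtain j where "j < length u" "e j = e k" "(precedes c r u)\<^sup>*\<^sup>* l j"
      using pullback[of l "e k"] y l unfolding scc_def by auto
    then have "(precedes c r u)\<^sup>*\<^sup>* l k"
      using embeds_inj_on[OF e(1)] k by (auto dest: inj_onD)
    ultimately show "y \<in> e ` scc c r u k"
      unfolding scc_def by blast
  qed
qed

lemma scc_image_downset_split:
  assumes A: "downset c r p A" "A \<noteq> {}" and sccA: "\<And>x. x \<in> A \<Longrightarrow> scc c r p x = A"
    and e: "embeds e u p" "e ` {..<length u} = {..<length p} - A"
  shows "scc c r p ` {..<length p} = insert A ((`) e ` scc c r u ` {..<length u})"
    and "A \<notin> (`) e ` scc c r u ` {..<length u}"
proof -
  have "scc c r p ` A = {A}"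
    using sccA A(2) by auto
  moreover have "scc c r p ` ({..<length p} - A) = (`) e ` scc c r u ` {..<length u}"
    using scc_embeds_complement[OF A(1) e] unfolding e(2)[symmetric] image_image by simp
  moreover have "{..<length p} = A \<union> ({..<length p} - A)"
    using A(1) unfolding downset_def by auto
  ultimately show "scc c r p ` {..<length p} = insert A ((`) e ` scc c r u ` {..<length u})"
    by (metis image_Un insert_is_Un)
  show "A \<notin> (`) e ` scc c r u ` {..<length u}"
  proof
    assume "A \<in> (`) e ` scc c r u ` {..<length u}"
    then obtain k where "k < length u" "A = e ` scc c r u k"
      by auto
    then have "e k \<in> A"
      unfolding scc_def by auto
    then show False
      using e(2) \<open>k < length u\<close> by auto
  qed
qed

lemma components_embeds:
  assumes e: "embeds e u p" and "distinct (map fst p)"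
  shows "image_mset (\<lambda>B. std (nths p B)) (mset_set ((`) e ` scc c r u ` {..<length u}))
    = components c r u"
proof -
  let ?S = "scc c r u ` {..<length u}"
  have scc_sub: "C \<subseteq> {..<length u}" if "C \<in> ?S" for C
    using that unfolding scc_def by auto
  have "mset_set ((`) e ` ?S) = image_mset ((`) e) (mset_set ?S)"
  proof (rule image_mset_mset_set[symmetric], rule inj_onI)
    fix C D assume "C \<in> ?S" "D \<in> ?S" "e ` C = e ` D"
    then show "C = D"
      using inj_on_image_eq_iff[OF embeds_inj_on[OF e]] scc_sub by blast
  qed
  also have "image_mset (\<lambda>B. std (nths p B)) (image_mset ((`) e) (mset_set ?S)) = components c r u"
    unfolding components_def multiset.map_comp
  proof (rule image_mset_cong)
    fix C assume "C \<in># mset_set ?S"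
    then show "((\<lambda>B. std (nths p B)) \<circ> (`) e) C = std (nths u C)"
      using std_nths_embeds[OF e assms(2)] scc_sub by auto
  qed
  finally show ?thesis .
qed

lemma components_msum2:
  assumes c: "\<forall>i<m. c i \<in> {-1, 1}" and r: "\<forall>j<n. r j \<in> {-1, 1}"
    and ms: "msum2 m n M c r q u p" and q: "indivisible m n M c r q"
  shows "components c r p = add_mset q (components c r u)"
proof -
  have p: "gridded m n M p"
    using ms unfolding msum2_def by simp
  obtain A where A: "downset c r p A" and q_eq: "q = std (nths p A)"
    and u_eq: "u = std (nths p ({..<length p} - A))"
    using ms msum2_iff_downset[OF c r p] by blast
  define e where "e = (!) (sorted_list_of_set ({..<length p} - A))"
  have A_sub: "A \<subseteq> {..<length p}"
    using A unfolding downset_def by simp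
  have e: "embeds e u p" "e ` {..<length u} = {..<length p} - A"
    unfolding e_def u_eq
    by (rule embeds_std_nths, blast, rule image_sorted_list_of_set_std_nths, blast)
  have "scc c r p x = A" if "x \<in> A" for x
    using scc_eq_downset[OF A embeds_std_nths[OF A_sub] image_sorted_list_of_set_std_nths[OF A_sub]]
      indivisible_rtranclp_precedes[OF c r q[unfolded q_eq]] that by blast
  moreover have "A \<noteq> {}"
    using q std_nths_eq_Nil_iff[OF A_sub] unfolding q_eq indivisible_def by blast
  ultimately show ?thesis
    using scc_image_downset_split[OF A _ _ e] components_embeds[OF e(1)] p
    unfolding components_def[of c r p] q_eq gridded_def by simp
qed

lemma mset_eq_components:
  assumes c: "\<forall>i<m. c i \<in> {-1, 1}" and r: "\<forall>j<n. r j \<in> {-1, 1}"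
  shows "msum_list m n M c r ps p \<Longrightarrow> \<forall>q\<in>set ps. indivisible m n M c r q \<Longrightarrow>
    mset ps = components c r p"
proof (induction ps arbitrary: p)
  case Nil
  then show ?case
    by (simp add: components_def)
next
  case (Cons q ps)
  then obtain u where "msum_list m n M c r ps u" and "msum2 m n M c r q u p"
    by auto
  with Cons show ?case
    using components_msum2[OF c r] by simp
qed

lemma downset_image_embeds:
  assumes A: "downset c r p A" and f: "embeds f q p" "f ` {..<length q} = A"
    and B: "downset c r q B"
  shows "downset c r p (f ` B)"
  unfolding downset_def
proof (intro conjI allI impI)
  show "f ` B \<subseteq> {..<length p}"
    using B f(1) unfolding downset_def embeds_def by auto
  fix x y assume xy: "precedes c r p x y" and "y \<in> f ` B"
  then obtain l where l: "l \<in> B" "y = f l"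
    by blast
  then have "l < length q"
    using B unfolding downset_def by auto
  then have "x \<in> A"
    using A f(2) xy l unfolding downset_def by blast
  then obtain k where "k < length q" "x = f k"
    using f(2) by auto
  then have "precedes c r q k l"
    using precedes_embeds[OF f(1) _ \<open>l < length q\<close>] xy l by simp
  then show "x \<in> f ` B"
    using B l \<open>x = f k\<close> unfolding downset_def by blast
qed

lemma indivisible_std_nths_min_downset:
  assumes c: "\<forall>i<m. c i \<in> {-1, 1}" and r: "\<forall>j<n. r j \<in> {-1, 1}"
    and p: "gridded m n M p" and A: "downset c r p A" "A \<noteq> {}"
    and min: "\<And>B. downset c r p B \<Longrightarrow> B \<noteq> {} \<Longrightarrow> card A \<le> card B"
  shows "indivisible m n M c r (std (nths p A))"
proof -
  let ?q = "std (nths p A)" and ?f = "(!) (sorted_list_of_set A)"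
  have A_sub: "A \<subseteq> {..<length p}"
    using A unfolding downset_def by simp
  have "B = {..<length ?q}" if B: "downset c r ?q B" "B \<noteq> {}" for B
  proof -
    have "card A \<le> card (?f ` B)"
      using min downset_image_embeds[OF A(1) embeds_std_nths[OF A_sub]
          image_sorted_list_of_set_std_nths[OF A_sub] B(1)] B(2) by blast
    also have "\<dots> = card B"
      using B(1) embeds_inj_on[OF embeds_std_nths[OF A_sub]] unfolding downset_def
      by (simp add: card_image inj_on_subset)
    finally have "card {..<length ?q} \<le> card B"
      using length_std_nths[OF A_sub] by simp
    moreover have "B \<subseteq> {..<length ?q}"
      using B(1) unfolding downset_def by simp
    ultimately show ?thesis
      using card_seteq[OF finite_lessThan] by blast
  qed
  moreover have "?q \<noteq> []"
    using std_nths_eq_Nil_iff[OF A_sub] A(2) by simp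
  ultimately show ?thesis
    using indivisible_iff_downset[OF c r gridded_std_nths[OF p A_sub]] by blast
qed

lemma exists_indivisible_msum_list:
  assumes c: "\<forall>i<m. c i \<in> {-1, 1}" and r: "\<forall>j<n. r j \<in> {-1, 1}"
  shows "gridded m n M p \<Longrightarrow> \<exists>ps. (\<forall>q\<in>set ps. indivisible m n M c r q) \<and> msum_list m n M c r ps p"
proof (induction "length p" arbitrary: p rule: less_induct)
  case less
  show ?case
  proof (cases "p = []")
    case True
    then show ?thesis
      by (intro exI[of _ "[]"]) simp
  next
    case False
    have "downset c r p {..<length p}"
      unfolding downset_def by (auto dest: precedes_less_length)
    with False obtain A where A: "downset c r p A" "A \<noteq> {}"
      and min: "\<And>B. downset c r p B \<Longrightarrow> B \<noteq> {} \<Longrightarrow> card A \<le> card B"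
      using ex_has_least_nat[of "\<lambda>B. downset c r p B \<and> B \<noteq> {}" "{..<length p}" card] by auto
    let ?u = "std (nths p ({..<length p} - A))"
    have A_sub: "A \<subseteq> {..<length p}"
      using A unfolding downset_def by simp
    have "card A > 0"
      using A(2) finite_subset[OF A_sub] by (simp add: card_gt_0_iff)
    moreover have "card A \<le> length p"
      using card_mono[OF finite_lessThan A_sub] by simp
    ultimately have "length ?u < length p"
      using A_sub length_std_nths[of "{..<length p} - A" p]
      by (simp add: card_Diff_subset finite_subset)
    moreover have "gridded m n M ?u"
      using gridded_std_nths[OF less.prems Diff_subset] .
    ultimately obtain ps where "\<forall>q\<in>set ps. indivisible m n M c r q" "msum_list m n M c r ps ?u"
      using less.hyps by blast
    moreover have "msum2 m n M c r (std (nths p A)) ?u p"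
      using msum2_iff_downset[OF c r less.prems] A(1) by blast
    ultimately show ?thesis
      using indivisible_std_nths_min_downset[OF c r less.prems A min]
      by (intro exI[of _ "std (nths p A) # ps"]) auto
  qed
qed

theorem lemma3p4:
  fixes m n :: nat and M :: "nat \<Rightarrow> nat \<Rightarrow> int" and c r :: "nat \<Rightarrow> int" and p :: gperm
  assumes entries: "\<forall>i<m. \<forall>j<n. M i j \<in> {-1, 0, 1}"
    and c_sign: "\<forall>i<m. c i \<in> {-1, 1}"
    and r_sign: "\<forall>j<n. r j \<in> {-1, 1}"
    and pmm: "\<forall>i<m. \<forall>j<n. M i j \<noteq> 0 \<longrightarrow> M i j = c i * r j"
    and grid: "gridded m n M p"
  shows "(\<exists>ps. (\<forall>q\<in>set ps. indivisible m n M c r q) \<and> msum_list m n M c r ps p) \<and>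
         (\<forall>ps qs. (\<forall>q\<in>set ps. indivisible m n M c r q) \<and> msum_list m n M c r ps p \<and>
                  (\<forall>q\<in>set qs. indivisible m n M c r q) \<and> msum_list m n M c r qs p
                  \<longrightarrow> length ps = length qs \<and> mset ps = mset qs)"
proof (intro conjI allI impI)
  show "\<exists>ps. (\<forall>q\<in>set ps. indivisible m n M c r q) \<and> msum_list m n M c r ps p"
    using exists_indivisible_msum_list[OF c_sign r_sign grid] .
next
  fix ps qs
  assume "(\<forall>q\<in>set ps. indivisible m n M c r q) \<and> msum_list m n M c r ps p \<and>
    (\<forall>q\<in>set qs. indivisible m n M c r q) \<and> msum_list m n M c r qs p"
  then have "mset ps = mset qs"
    using mset_eq_components[OF c_sign r_sign] by metis
  then show "mset ps = mset qs" and "length ps = length qs"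
    using size_mset by metis+
qed

end
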